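(* Let $(g,f)$ be a Riordan matrix with $f(t)=\sum_{j\ge1}f_jt^j$; set $f_0=f_{-1}=0$ and $\tilde f_j=f_{j-1}$ for $j\ge0$ (so $\tilde f_0=\tilde f_1=0$). For a sequence $(b_j)_{j\ge0}$ set $\tilde b_0=0$ and $\tilde b_j=b_{j-1}$ for $j\ge1$. Then $(b_j)_{j\ge0}$ is a type-I $B$-sequence of $(g,f)$ if and only if $f_1=1$, $f_3=f_2^2$, for every $\ell\ge1$ $$b_{\ell-1}=f_{2\ell}-\sum_{\mathbf i=(i_1,\dots,i_k)\in\mathcal D_{2\ell,\ell-1}}\tilde b_k\,\tilde f_{i_1}\tilde f_{i_2}\cdots\tilde f_{i_k},$$ and for every $\ell\ge2$ $$f_{2\ell+1}=\sum_{\mathbf i=(i_1,\dots,i_k)\in\mathcal D_{2\ell+1}}\tilde b_k\,\tilde f_{i_1}\cdots\tilde f_{i_k} = f_2f_{2\ell}+\sum_{\mathbf i=(i_1,\dots,i_k)\in\mathcal D'_{2\ell+1,\ell}}\tilde b_k\,\tilde f_{i_1}\cdots\tilde f_{i_k}.$$ (Thus $b_0=f_2$, $b_1=f_4-b_0^3$, $f_5=b_0^4+3b_0b_1$, $b_2=f_6-b_0^5-5b_0^2b_1$, etc., with $f_{2\ell}$ arbitrary.)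
   Context: Let $K$ be $\mathbb{R}$ or $\mathbb{C}$. A (proper) Riordan matrix is a pair $(g,f)$ of formal power series in $K[[t]]$ with $g(0)=1$, $f(0)=0$, $f'(0)\neq 0$, identified with the infinite lower triangular matrix $(d_{n,k})_{n,k\ge0}$, $d_{n,k}=[t^n]g(t)f(t)^k$; we set $d_{n,k}=0$ if $n<0$, $k<0$ or $k>n$. A type-I $B$-sequence of $(g,f)$ is a sequence $(b_j)_{j\ge0}$ such that $d_{n+1,k}=d_{n,k-1}+\sum_{j\ge0}b_j d_{n-j,k+j}$ for all $n\ge0$ and $k\ge1$. For positive integers $n,m,k$, $\mathcal D_{n,m,k}$ is the set of tuples $(i_1,\dots,i_k)$ of positive integers with $i_1+\cdots+i_k=n$ (here $k\le m$); $\mathcal D_{n,m}=\bigcup_{k=1}^m\mathcal D_{n,m,k}$ (compositions of $n$ into at most $m$ parts), $\mathcal D_n=\mathcal D_{n,n}$ (all compositions of $n$), and $\mathcal D'_{n,m}=\bigcup_{k=2}^m\mathcal D_{n,m,k}$. By convention $\mathcal D_{2,0}=\emptyset$ (empty sums are $0$). In each sum, $k$ is the length of the composition $\mathbf i$. *)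

theory Defs
  imports "HOL-Computational_Algebra.Formal_Power_Series"
begin

definition riordan :: "'a::field fps \<Rightarrow> 'a fps \<Rightarrow> bool" where
  "riordan g f \<longleftrightarrow> fps_nth g 0 = 1 \<and> fps_nth f 0 = 0 \<and> fps_nth f 1 \<noteq> 0"

definition riordan_entry :: "'a::field fps \<Rightarrow> 'a fps \<Rightarrow> nat \<Rightarrow> nat \<Rightarrow> 'a" where
  "riordan_entry g f n k = (if k \<le> n then fps_nth (g * f ^ k) n else 0)"

text \<open>Type-I B-sequence. The sum over j \<ge> 0 is restricted to j \<le> n, since
  d_{n-j,k+j} = 0 for j > n (negative row index).\<close>
definition is_B_seq_I :: "'a::field fps \<Rightarrow> 'a fps \<Rightarrow> (nat \<Rightarrow> 'a) \<Rightarrow> bool" where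
  "is_B_seq_I g f b \<longleftrightarrow>
     (\<forall>n k. 1 \<le> k \<longrightarrow>
        riordan_entry g f (n + 1) k =
          riordan_entry g f n (k - 1) + (\<Sum>j\<le>n. b j * riordan_entry g f (n - j) (k + j)))"

definition comps_between :: "nat \<Rightarrow> nat \<Rightarrow> nat \<Rightarrow> nat list set" where
  "comps_between n lo hi =
     {is. (\<forall>i\<in>set is. 0 < i) \<and> sum_list is = n \<and> lo \<le> length is \<and> length is \<le> hi}"

definition comps_le :: "nat \<Rightarrow> nat \<Rightarrow> nat list set" where
  "comps_le n m = comps_between n 1 m"

definition comps :: "nat \<Rightarrow> nat list set" where
  "comps n = comps_le n n"

definition comps' :: "nat \<Rightarrow> nat \<Rightarrow> nat list set" where
  "comps' n m = comps_between n 2 m"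

definition ftil :: "'a::field fps \<Rightarrow> nat \<Rightarrow> 'a" where
  "ftil f j = (if j = 0 then 0 else fps_nth f (j - 1))"

definition btil :: "(nat \<Rightarrow> 'a::field) \<Rightarrow> nat \<Rightarrow> 'a" where
  "btil b k = (if k = 0 then 0 else b (k - 1))"

definition comp_term :: "'a::field fps \<Rightarrow> (nat \<Rightarrow> 'a) \<Rightarrow> nat list \<Rightarrow> 'a" where
  "comp_term f b is = btil b (length is) * prod_list (map (ftil f) is)"

definition thm2p4_conditions :: "'a::field fps \<Rightarrow> (nat \<Rightarrow> 'a) \<Rightarrow> bool" where
  "thm2p4_conditions f b \<longleftrightarrow>
     fps_nth f 1 = 1 \<and> fps_nth f 3 = (fps_nth f 2)^2 \<and>
     (\<forall>l\<ge>1. b (l - 1) = fps_nth f (2*l) - (\<Sum>is\<in>comps_le (2*l) (l - 1). comp_term f b is)) \<and>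
     (\<forall>l\<ge>2. fps_nth f (2*l+1) = (\<Sum>is\<in>comps (2*l+1). comp_term f b is) \<and>
             fps_nth f (2*l+1) = fps_nth f 2 * fps_nth f (2*l)
                                  + (\<Sum>is\<in>comps' (2*l+1) l. comp_term f b is))"

end

(* The B-sequence recurrence for column k + 1 says that all coefficients of index at least 1 of
   g f^k (f - t - A(t f)) vanish, where A(t) = sum_j b_j t^(j+1) has coefficients b~_j.  Since the
   defect has no constant term and g is invertible, the recurrence is equivalent to the functional
   equation f = t + A(t f).  Expanding [t^n] A(t f) over compositions of n, whose parts index the
   coefficients f~_i of t f, gives f_n = [n = 1] + sum over D_n of b~_k f~_(i_1) ... f~_(i_k).
   As f~_1 = f_0 = 0, only compositions with all parts at least 2 contribute, so none of length
   above n/2; for n = 2l the only one of length l is (2,...,2), contributing b_(l-1) f_1^l, and for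
   odd n the composition of length 1 contributes b_0 f_(n-1).  Separating these terms turns the
   even and odd coefficient equations into the stated conditions. *)

theory Submission
  imports Defs
begin

unbundle fps_syntax

lemma prod_list_eq_0_if_mem: "(0::'a::{monoid_mult,mult_zero}) \<in> set xs \<Longrightarrow> prod_list xs = 0"
  by (induction xs) auto

lemma comps_between_empty: "hi < lo \<Longrightarrow> comps_between n lo hi = {}"
  by (auto simp: comps_between_def)

lemma finite_comps_between: "finite (comps_between n lo hi)"
proof (rule finite_subset)
  show "comps_between n lo hi \<subseteq> {xs. set xs \<subseteq> {0..n} \<and> length xs \<le> hi}"
    unfolding comps_between_def using member_le_sum_list by fastforce
  show "finite {xs. set xs \<subseteq> {0..n} \<and> length xs \<le> hi}"
    by (rule finite_lists_length_le) simp
qed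

lemma sum_comps_between_by_length:
  "(\<Sum>xs\<in>comps_between n lo hi. F xs) = (\<Sum>k=lo..hi. \<Sum>xs\<in>comps_between n k k. F xs)"
proof -
  have "comps_between n lo hi = (\<Union>k\<in>{lo..hi}. comps_between n k k)"
    unfolding comps_between_def by auto
  then show ?thesis
    by (simp only:) (intro sum.UNION_disjoint ballI finite_comps_between finite_atLeastAtMost;
      auto simp: comps_between_def)
qed

lemma comps_between_single: "0 < n \<Longrightarrow> comps_between n 1 1 = {[n]}"
  by (auto simp: comps_between_def length_Suc_conv dest!: sym[of "Suc 0"])

lemma twice_length_le_sum_list:
  "\<forall>i\<in>set xs. 2 \<le> i \<Longrightarrow> 2 * length xs \<le> sum_list (xs :: nat list)"
  by (induction xs) auto

lemma sum_list_eq_twice_length_imp_replicate: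
  assumes "\<forall>i\<in>set xs. 2 \<le> i" "sum_list xs = 2 * length (xs :: nat list)"
  shows "xs = replicate (length xs) 2"
  using assms
proof (induction xs)
  case (Cons a xs)
  then show ?case using twice_length_le_sum_list[of xs] by auto
qed simp

lemma comp_term_eq_0_unless_parts_ge_2:
  assumes "f $ 0 = 0" "xs \<in> comps_between n lo hi" "\<not> (\<forall>i\<in>set xs. 2 \<le> i)"
  shows "comp_term f b xs = 0"
proof -
  have "1 \<in> set xs"
    using assms(2,3) by (auto simp: comps_between_def not_le less_2_cases_iff)
  then show ?thesis
    using assms(1) by (force simp: comp_term_def ftil_def intro: prod_list_eq_0_if_mem)
qed

lemma sum_comps_of_length_eq_0:
  assumes "f $ 0 = 0" "n < 2 * k"
  shows "(\<Sum>xs\<in>comps_between n k k. comp_term f b xs) = 0"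
proof (rule sum.neutral, rule ballI)
  fix xs assume xs: "xs \<in> comps_between n k k"
  then have "\<not> (\<forall>i\<in>set xs. 2 \<le> i)"
    using twice_length_le_sum_list[of xs] assms(2) by (auto simp: comps_between_def)
  with assms(1) xs show "comp_term f b xs = 0" by (rule comp_term_eq_0_unless_parts_ge_2)
qed

lemma sum_comps_of_half_length:
  assumes "f $ 0 = 0" "1 \<le> l"
  shows "(\<Sum>xs\<in>comps_between (2*l) l l. comp_term f b xs) = b (l - 1) * (f $ 1) ^ l"
proof -
  have "(\<Sum>xs\<in>comps_between (2*l) l l. comp_term f b xs)
          = (\<Sum>xs\<in>{replicate l 2}. comp_term f b xs)"
  proof (rule sum.mono_neutral_right)
    show "\<forall>xs\<in>comps_between (2*l) l l - {replicate l 2}. comp_term f b xs = 0"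
    proof
      fix xs assume "xs \<in> comps_between (2*l) l l - {replicate l 2}"
      then have xs: "xs \<in> comps_between (2*l) l l" "xs \<noteq> replicate l 2" by auto
      have "\<not> (\<forall>i\<in>set xs. 2 \<le> i)"
      proof
        assume "\<forall>i\<in>set xs. 2 \<le> i"
        then have "xs = replicate l 2"
          using xs(1) sum_list_eq_twice_length_imp_replicate[of xs]
          by (auto simp: comps_between_def)
        with xs(2) show False ..
      qed
      with assms(1) xs(1) show "comp_term f b xs = 0" by (rule comp_term_eq_0_unless_parts_ge_2)
    qed
    show "finite (comps_between (2*l) l l)" by (rule finite_comps_between)
    show "{replicate l 2} \<subseteq> comps_between (2*l) l l"
      by (auto simp: comps_between_def sum_list_replicate)
  qed
  also have "\<dots> = b (l - 1) * (f $ 1) ^ l"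
    using assms by (simp add: comp_term_def btil_def ftil_def prod_list_replicate)
  finally show ?thesis .
qed

lemma sum_comps_of_length_1:
  "0 < n \<Longrightarrow> (\<Sum>xs\<in>comps_between n 1 1. comp_term f b xs) = b 0 * f $ (n - 1)"
  by (subst comps_between_single) (simp_all add: comp_term_def btil_def ftil_def)

lemma sum_comps_by_length_cut:
  assumes "f $ 0 = 0" "m \<le> hi" "n < 2 * Suc m"
  shows "(\<Sum>k=lo..hi. \<Sum>xs\<in>comps_between n k k. comp_term f b xs)
           = (\<Sum>k=lo..m. \<Sum>xs\<in>comps_between n k k. comp_term f b xs)"
proof (rule sum.mono_neutral_right)
  show "\<forall>k\<in>{lo..hi} - {lo..m}. (\<Sum>xs\<in>comps_between n k k. comp_term f b xs) = 0"
  proof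
    fix k assume "k \<in> {lo..hi} - {lo..m}"
    then have "n < 2 * k" using assms(3) by auto
    with assms(1) show "(\<Sum>xs\<in>comps_between n k k. comp_term f b xs) = 0"
      by (rule sum_comps_of_length_eq_0)
  qed
qed (use assms(2) in auto)

lemma sum_comps_even:
  assumes "f $ 0 = 0" "1 \<le> l"
  shows "(\<Sum>xs\<in>comps (2*l). comp_term f b xs)
           = (\<Sum>xs\<in>comps_le (2*l) (l - 1). comp_term f b xs) + b (l - 1) * (f $ 1) ^ l"
proof -
  let ?C = "\<lambda>k. \<Sum>xs\<in>comps_between (2*l) k k. comp_term f b xs"
  have "(\<Sum>xs\<in>comps (2*l). comp_term f b xs) = (\<Sum>k=1..2*l. ?C k)"
    unfolding comps_def comps_le_def by (rule sum_comps_between_by_length)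
  also have "\<dots> = (\<Sum>k=1..l. ?C k)"
    using assms by (intro sum_comps_by_length_cut) auto
  also have "\<dots> = (\<Sum>k=1..l-1. ?C k) + ?C l"
    using assms(2) sum.cl_ivl_Suc[of ?C 1 "l - 1"] by simp
  also have "(\<Sum>k=1..l-1. ?C k) = (\<Sum>xs\<in>comps_le (2*l) (l - 1). comp_term f b xs)"
    unfolding comps_le_def by (rule sum_comps_between_by_length[symmetric])
  finally show ?thesis
    unfolding sum_comps_of_half_length[OF assms] .
qed

lemma sum_comps_odd:
  assumes "f $ 0 = 0" "1 \<le> l"
  shows "(\<Sum>xs\<in>comps (2*l+1). comp_term f b xs)
           = b 0 * f $ (2*l) + (\<Sum>xs\<in>comps' (2*l+1) l. comp_term f b xs)"
proof -
  let ?C = "\<lambda>k. \<Sum>xs\<in>comps_between (2*l+1) k k. comp_term f b xs"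
  have "(\<Sum>xs\<in>comps (2*l+1). comp_term f b xs) = (\<Sum>k=1..2*l+1. ?C k)"
    unfolding comps_def comps_le_def by (rule sum_comps_between_by_length)
  also have "\<dots> = (\<Sum>k=1..l. ?C k)"
    using assms by (intro sum_comps_by_length_cut) auto
  also have "\<dots> = ?C 1 + (\<Sum>k=2..l. ?C k)"
    using assms(2) sum.atLeast_Suc_atMost[of 1 l ?C] by (simp add: numeral_2_eq_2)
  also have "?C 1 = b 0 * f $ (2*l)"
    using sum_comps_of_length_1[of "2*l+1" f b] by simp
  also have "(\<Sum>k=2..l. ?C k) = (\<Sum>xs\<in>comps' (2*l+1) l. comp_term f b xs)"
    unfolding comps'_def by (rule sum_comps_between_by_length[symmetric])
  finally show ?thesis .
qed

lemma fps_mult_power_nth_eq_0: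
  fixes G h :: "'a::comm_ring_1 fps"
  assumes "h $ 0 = 0" "n < k"
  shows "(G * h ^ k) $ n = 0"
proof -
  have "h = fps_X * fps_shift 1 h"
    by (rule fps_ext) (simp add: assms(1))
  then have "G * h ^ k = fps_X ^ k * (G * fps_shift 1 h ^ k)"
    by (metis mult.left_commute power_mult_distrib)
  then show ?thesis
    using assms(2) by (simp add: fps_X_power_mult_nth)
qed

lemma fps_power_nth_comps:
  fixes h :: "'a::comm_ring_1 fps"
  assumes "h $ 0 = 0"
  shows "(h ^ k) $ n = (\<Sum>xs\<in>comps_between n k k. prod_list (map (($) h) xs))"
proof (cases k)
  case 0
  have "comps_between n 0 0 = (if n = 0 then {[]} else {})"
    by (auto simp: comps_between_def)
  then show ?thesis using 0 by simp
next
  case (Suc m)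
  have "(h ^ k) $ n = (\<Sum>v\<in>natpermute n k. prod_list (map (($) h) v))"
    unfolding Suc fps_power_nth_Suc
    by (intro sum.cong refl)
      (auto simp: natpermute_def prod.list_conv_set_nth atLeastLessThanSuc_atLeastAtMost)
  also have "\<dots> = (\<Sum>xs\<in>comps_between n k k. prod_list (map (($) h) xs))"
  proof (rule sum.mono_neutral_right)
    show "\<forall>v\<in>natpermute n k - comps_between n k k. prod_list (map (($) h) v) = 0"
    proof
      fix v assume "v \<in> natpermute n k - comps_between n k k"
      then have "0 \<in> set v" by (auto simp: natpermute_def comps_between_def)
      then show "prod_list (map (($) h) v) = 0"
        using assms by (force intro: prod_list_eq_0_if_mem)
    qed
  qed (simp_all add: natpermute_finite, auto simp: natpermute_def comps_between_def)
  finally show ?thesis .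
qed

lemma fps_compose_nth_comps:
  fixes a h :: "'a::comm_ring_1 fps"
  assumes "h $ 0 = 0" "0 < n"
  shows "(a oo h) $ n = (\<Sum>xs\<in>comps n. a $ length xs * prod_list (map (($) h) xs))"
proof -
  let ?F = "\<lambda>xs. a $ length xs * prod_list (map (($) h) xs)"
  have "(a oo h) $ n = (\<Sum>k=0..n. \<Sum>xs\<in>comps_between n k k. ?F xs)"
    unfolding fps_compose_nth fps_power_nth_comps[OF assms(1)] sum_distrib_left
    by (intro sum.cong refl) (auto simp: comps_between_def)
  also have "\<dots> = (\<Sum>k=1..n. \<Sum>xs\<in>comps_between n k k. ?F xs)"
  proof -
    have "comps_between n 0 0 = {}" using assms(2) by (auto simp: comps_between_def)
    then show ?thesis by (simp add: sum.atLeast_Suc_atMost)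
  qed
  also have "\<dots> = (\<Sum>xs\<in>comps n. ?F xs)"
    unfolding comps_def comps_le_def by (rule sum_comps_between_by_length[symmetric])
  finally show ?thesis .
qed

lemma fps_nth_X_mult_eq_ftil: "fps_nth (fps_X * f) = ftil f"
  by (auto simp: ftil_def)

lemma compose_nth_eq_sum_comp_term:
  assumes "f $ 0 = 0" "0 < n"
  shows "(Abs_fps (btil b) oo (fps_X * f)) $ n = (\<Sum>xs\<in>comps n. comp_term f b xs)"
proof -
  have "(Abs_fps (btil b) oo (fps_X * f)) $ n
          = (\<Sum>xs\<in>comps n. Abs_fps (btil b) $ length xs * prod_list (map (($) (fps_X * f)) xs))"
    using assms by (intro fps_compose_nth_comps) simp_all
  then show ?thesis
    by (simp only: fps_nth_X_mult_eq_ftil fps_nth_Abs_fps comp_term_def)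
qed

lemma fps_mult_compose_nth:
  fixes G a h :: "'a::comm_ring_1 fps"
  assumes "h $ 0 = 0"
  shows "(G * (a oo h)) $ m = (\<Sum>i\<le>m. a $ i * (G * h ^ i) $ m)"
proof -
  have "(G * (a oo h)) $ m = (\<Sum>j=0..m. \<Sum>i\<le>m. G $ j * (a $ i * (h ^ i) $ (m - j)))"
    unfolding fps_mult_nth fps_compose_nth sum_distrib_left
  proof (rule sum.cong[OF refl])
    fix j
    show "(\<Sum>i=0..m - j. G $ j * (a $ i * (h ^ i) $ (m - j)))
            = (\<Sum>i\<le>m. G $ j * (a $ i * (h ^ i) $ (m - j)))"
      unfolding atLeast0AtMost
      using assms fps_mult_power_nth_eq_0[of h "m - j" _ 1] by (intro sum.mono_neutral_left) auto
  qed
  also have "\<dots> = (\<Sum>i\<le>m. a $ i * (\<Sum>j=0..m. G $ j * (h ^ i) $ (m - j)))"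
    by (subst sum.swap) (simp add: sum_distrib_left mult.left_commute)
  also have "\<dots> = (\<Sum>i\<le>m. a $ i * (G * h ^ i) $ m)"
    by (simp only: fps_mult_nth)
  finally show ?thesis .
qed

lemma riordan_entry_eq_nth:
  assumes "f $ 0 = 0"
  shows "riordan_entry g f n k = (g * f ^ k) $ n"
  using fps_mult_power_nth_eq_0[OF assms, of n k g] by (simp add: riordan_entry_def)

lemma B_seq_I_entry_iff:
  fixes g f :: "'a::field fps"
  assumes f0: "f $ 0 = 0"
  shows "riordan_entry g f (Suc n) (Suc k)
           = riordan_entry g f n k + (\<Sum>j\<le>n. b j * riordan_entry g f (n - j) (Suc k + j))
         \<longleftrightarrow> (g * f ^ k * (f - fps_X - (Abs_fps (btil b) oo (fps_X * f)))) $ Suc n = 0"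
proof -
  define G where "G = g * f ^ k"
  have entry_here: "riordan_entry g f (Suc n) (Suc k) = (G * f) $ Suc n"
    by (simp add: riordan_entry_eq_nth[OF f0] G_def mult_ac)
  have entry_left: "riordan_entry g f n k = (fps_X * G) $ Suc n"
    by (simp add: riordan_entry_eq_nth[OF f0] G_def)
  have entry_diag: "riordan_entry g f (n - j) (Suc k + j) = (G * (fps_X * f) ^ Suc j) $ Suc n"
    if "j \<le> n" for j
  proof -
    have "G * (fps_X * f) ^ Suc j = fps_X ^ Suc j * (g * f ^ (Suc k + j))"
      by (simp add: G_def power_mult_distrib power_add mult_ac)
    then have "(G * (fps_X * f) ^ Suc j) $ Suc n = (g * f ^ (Suc k + j)) $ (n - j)"
      using that by (simp only: fps_X_power_mult_nth) simp
    then show ?thesis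
      by (simp only: riordan_entry_eq_nth[OF f0])
  qed
  have "(G * (Abs_fps (btil b) oo (fps_X * f))) $ Suc n
          = (\<Sum>i\<le>Suc n. btil b i * (G * (fps_X * f) ^ i) $ Suc n)"
    by (simp add: fps_mult_compose_nth)
  also have "\<dots> = (\<Sum>j\<le>n. b j * (G * (fps_X * f) ^ Suc j) $ Suc n)"
    by (simp only: sum.atMost_Suc_shift) (simp add: btil_def)
  also have "\<dots> = (\<Sum>j\<le>n. b j * riordan_entry g f (n - j) (Suc k + j))"
    by (intro sum.cong refl) (simp only: entry_diag atMost_iff)
  finally have entry_sum: "(\<Sum>j\<le>n. b j * riordan_entry g f (n - j) (Suc k + j))
                             = (G * (Abs_fps (btil b) oo (fps_X * f))) $ Suc n" ..
  have "g * f ^ k * (f - fps_X - (Abs_fps (btil b) oo (fps_X * f)))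
          = G * f - fps_X * G - G * (Abs_fps (btil b) oo (fps_X * f))"
    by (simp add: G_def algebra_simps)
  then have "(g * f ^ k * (f - fps_X - (Abs_fps (btil b) oo (fps_X * f)))) $ Suc n
      = (G * f) $ Suc n - (fps_X * G) $ Suc n - (G * (Abs_fps (btil b) oo (fps_X * f))) $ Suc n"
    by (simp only: fps_sub_nth)
  then show ?thesis
    unfolding entry_here entry_left entry_sum by (simp only: diff_eq_eq add.commute add_0)
qed

lemma is_B_seq_I_iff_functional_equation:
  fixes g f :: "'a::field fps"
  assumes f0: "f $ 0 = 0" and "g \<noteq> 0"
  shows "is_B_seq_I g f b \<longleftrightarrow> f = fps_X + (Abs_fps (btil b) oo (fps_X * f))"
proof -
  define D where "D = f - fps_X - (Abs_fps (btil b) oo (fps_X * f))"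
  have "D $ 0 = 0" using f0 by (simp add: D_def btil_def)
  have vanishes_iff: "(\<forall>n. (P * D) $ Suc n = 0) \<longleftrightarrow> P * D = 0" for P
  proof
    assume "\<forall>n. (P * D) $ Suc n = 0"
    with \<open>D $ 0 = 0\<close> show "P * D = 0"
      by (intro fps_ext) (metis fps_mult_nth_0 fps_zero_nth mult_zero_right not0_implies_Suc)
  qed (simp only: fps_zero_nth simp_thms)
  have "is_B_seq_I g f b \<longleftrightarrow> (\<forall>n k. riordan_entry g f (Suc n) (Suc k)
           = riordan_entry g f n k + (\<Sum>j\<le>n. b j * riordan_entry g f (n - j) (Suc k + j)))"
    (is "_ \<longleftrightarrow> (\<forall>n k. ?column n k)")
  proof
    assume "is_B_seq_I g f b"
    then show "\<forall>n k. ?column n k"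
      unfolding is_B_seq_I_def by (metis Suc_eq_plus1 diff_Suc_1 le_add2 plus_1_eq_Suc)
  next
    assume column: "\<forall>n k. ?column n k"
    show "is_B_seq_I g f b"
      unfolding is_B_seq_I_def
    proof (intro allI impI)
      fix n k :: nat assume "1 \<le> k"
      then show "riordan_entry g f (n + 1) k = riordan_entry g f n (k - 1)
                   + (\<Sum>j\<le>n. b j * riordan_entry g f (n - j) (k + j))"
        using column[rule_format, of n "k - 1"] by simp
    qed
  qed
  also have "\<dots> \<longleftrightarrow> (\<forall>k. g * f ^ k * D = 0)"
    unfolding B_seq_I_entry_iff[OF f0] D_def[symmetric] vanishes_iff[symmetric] by blast
  also have "\<dots> \<longleftrightarrow> D = 0"
  proof
    assume "\<forall>k. g * f ^ k * D = 0"
    then have "g * D = 0" by (metis power_0 mult_1_right)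
    with \<open>g \<noteq> 0\<close> show "D = 0" by simp
  qed simp
  also have "\<dots> \<longleftrightarrow> f = fps_X + (Abs_fps (btil b) oo (fps_X * f))"
    by (simp add: D_def diff_diff_eq)
  finally show ?thesis .
qed

lemma functional_equation_iff_coeffs:
  assumes "f $ 0 = 0"
  shows "f = fps_X + (Abs_fps (btil b) oo (fps_X * f))
           \<longleftrightarrow> (\<forall>n>0. f $ n = (if n = 1 then 1 else 0) + (\<Sum>xs\<in>comps n. comp_term f b xs))"
proof -
  have "(fps_X + (Abs_fps (btil b) oo (fps_X * f))) $ 0 = f $ 0"
    using assms by (simp add: btil_def)
  moreover have "(fps_X + (Abs_fps (btil b) oo (fps_X * f))) $ n
                   = (if n = 1 then 1 else 0) + (\<Sum>xs\<in>comps n. comp_term f b xs)" if "0 < n" for n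
    using assms that by (simp add: compose_nth_eq_sum_comp_term)
  ultimately show ?thesis
    unfolding fps_eq_iff by (metis neq0_conv)
qed

lemma sum_comps_1:
  "f $ 0 = 0 \<Longrightarrow> (\<Sum>xs\<in>comps 1. comp_term f b xs) = 0"
  using sum_comps_of_length_1[of 1 f b] by (simp add: comps_def comps_le_def)

lemma sum_comps_3:
  "f $ 0 = 0 \<Longrightarrow> (\<Sum>xs\<in>comps 3. comp_term f b xs) = b 0 * f $ 2"
  using sum_comps_odd[of f 1 b] comps_between_empty[of 1 2 3] by (simp add: comps'_def)

lemma sum_comps_le_2_0: "(\<Sum>xs\<in>comps_le 2 0. comp_term f b xs) = 0"
  using comps_between_empty[of 0 1 2] by (simp add: comps_le_def)

lemma conditions_if_coeff_recursion:
  assumes f0: "f $ 0 = 0"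
    and rec: "\<forall>n>0. f $ n = (if n = 1 then 1 else 0) + (\<Sum>xs\<in>comps n. comp_term f b xs)"
  shows "thm2p4_conditions f b"
proof -
  have f1: "f $ 1 = 1"
    using rec[rule_format, of 1] sum_comps_1[OF f0] by simp
  have even: "b (l - 1) = f $ (2*l) - (\<Sum>xs\<in>comps_le (2*l) (l - 1). comp_term f b xs)"
    if "1 \<le> l" for l
    using rec[rule_format, of "2*l"] sum_comps_even[OF f0 that, of b] f1 that by simp
  have b0: "b 0 = f $ 2"
    using even[of 1] sum_comps_le_2_0 by simp
  have "f $ 3 = (f $ 2) ^ 2"
    using rec[rule_format, of 3] sum_comps_3[OF f0] b0 by (simp add: power2_eq_square)
  moreover have "f $ (2*l+1) = (\<Sum>xs\<in>comps (2*l+1). comp_term f b xs) \<and>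
      f $ (2*l+1) = f $ 2 * f $ (2*l) + (\<Sum>xs\<in>comps' (2*l+1) l. comp_term f b xs)"
    if "2 \<le> l" for l
    using rec[rule_format, of "2*l+1"] sum_comps_odd[OF f0, of l b] b0 that by simp
  ultimately show ?thesis
    unfolding thm2p4_conditions_def using f1 even by blast
qed

lemma coeff_recursion_if_conditions:
  assumes f0: "f $ 0 = 0" and "thm2p4_conditions f b" and "0 < n"
  shows "f $ n = (if n = 1 then 1 else 0) + (\<Sum>xs\<in>comps n. comp_term f b xs)"
proof -
  have f1: "f $ 1 = 1" and f3: "f $ 3 = (f $ 2) ^ 2"
    and even: "\<And>l. 1 \<le> l \<Longrightarrow>
      b (l - 1) = f $ (2*l) - (\<Sum>xs\<in>comps_le (2*l) (l - 1). comp_term f b xs)"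
    and odd: "\<And>l. 2 \<le> l \<Longrightarrow> f $ (2*l+1) = (\<Sum>xs\<in>comps (2*l+1). comp_term f b xs)"
    using \<open>thm2p4_conditions f b\<close> unfolding thm2p4_conditions_def by auto
  obtain l where "n = 2*l \<or> n = 2*l + 1" by (metis evenE oddE)
  then show ?thesis
  proof
    assume n: "n = 2*l"
    with \<open>0 < n\<close> have "1 \<le> l" by simp
    then show ?thesis using n even[of l] sum_comps_even[OF f0, of l b] f1 by simp
  next
    assume n: "n = 2*l + 1"
    consider "l = 0" | "l = 1" | "2 \<le> l" by linarith
    then show ?thesis
    proof cases
      case 1
      then show ?thesis using n f1 sum_comps_1[OF f0] by simp
    next
      case 2
      have "b 0 = f $ 2" using even[of 1] sum_comps_le_2_0 by simp
      then show ?thesis using 2 n f3 sum_comps_3[OF f0] by (simp add: power2_eq_square)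
    next
      case 3
      then show ?thesis using n odd[of l] by simp
    qed
  qed
qed

lemma is_B_seq_I_iff_conditions:
  fixes g f :: "'a::field fps"
  assumes "riordan g f"
  shows "is_B_seq_I g f b \<longleftrightarrow> thm2p4_conditions f b"
proof -
  have f0: "f $ 0 = 0" and g: "g \<noteq> 0"
    using assms by (auto simp: riordan_def)
  show ?thesis
    unfolding is_B_seq_I_iff_functional_equation[OF f0 g] functional_equation_iff_coeffs[OF f0]
    using conditions_if_coeff_recursion[OF f0] coeff_recursion_if_conditions[OF f0] by blast
qed

theorem theorem2p4:
  shows "(\<forall>(g::real fps) f (b::nat \<Rightarrow> real). riordan g f \<longrightarrow>
            (is_B_seq_I g f b \<longleftrightarrow> thm2p4_conditions f b)) \<and>
         (\<forall>(g::complex fps) f (b::nat \<Rightarrow> complex). riordan g f \<longrightarrow>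
            (is_B_seq_I g f b \<longleftrightarrow> thm2p4_conditions f b))"
  by (intro conjI allI impI is_B_seq_I_iff_conditions)

end
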